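(* Let $V$ be a real vector space, $C$ a convex cone in $V$ and $Y$ a decomposably $C$-antichain-convex subset of $V$. (1) $\mathcal{O}(C,\operatorname{co}(Y))\subseteq\mathcal{O}(C,Y)$. (2) If $C$ is pointed, then $\mathcal{O}(C,Y)=\mathcal{O}(C,\operatorname{co}(Y))$.
   Context: A cone in $V$ is a subset $C$ with $\lambda C\subseteq C$ for all $\lambda>0$ (possibly empty, need not contain $0$); it is pointed iff $C\cap(-C)\subseteq\{0\}$. $S\subseteq V$ is $C$-antichain-convex iff for all $x,y\in S$ and $\lambda\in[0,1]$ with $y-x\notin C\cup(-C)$ one has $\lambda x+(1-\lambda)y\in S$; $S$ is decomposably $C$-antichain-convex iff $S=S_1+\dots+S_n$ (Minkowski sum) for finitely many $C$-antichain-convex $S_i\subseteq V$. For $Z\subseteq V$, $y\in Z$ is a $C$-Pareto optimum of $Z$ iff $(Z\setminus\{y\})\cap(y+C)=\emptyset$; $\mathcal{O}(C,Z)$ is the set of $C$-Pareto optima of $Z$. $\operatorname{co}$ denotes convex hull. *)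

theory Defs
  imports "HOL-Analysis.Analysis" "HOL-Library.Set_Algebras"
begin

definition is_cone :: "'a::real_vector set \<Rightarrow> bool" where
  "is_cone C \<longleftrightarrow> (\<forall>l::real. l > 0 \<longrightarrow> (\<forall>x\<in>C. l *\<^sub>R x \<in> C))"

definition pointed_cone :: "'a::real_vector set \<Rightarrow> bool" where
  "pointed_cone C \<longleftrightarrow> C \<inter> uminus ` C \<subseteq> {0}"

definition antichain_convex :: "'a::real_vector set \<Rightarrow> 'a set \<Rightarrow> bool" where
  "antichain_convex C S \<longleftrightarrow>
     (\<forall>x\<in>S. \<forall>y\<in>S. \<forall>l::real. 0 \<le> l \<and> l \<le> 1 \<and> y - x \<notin> C \<union> uminus ` C
        \<longrightarrow> l *\<^sub>R x + (1 - l) *\<^sub>R y \<in> S)"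

definition decomp_antichain_convex :: "'a::real_vector set \<Rightarrow> 'a set \<Rightarrow> bool" where
  "decomp_antichain_convex C S \<longleftrightarrow>
     (\<exists>n::nat. \<exists>Si :: nat \<Rightarrow> 'a set. (\<forall>i<n. antichain_convex C (Si i)) \<and> S = (\<Sum>i<n. Si i))"

definition pareto_optima :: "'a::real_vector set \<Rightarrow> 'a set \<Rightarrow> 'a set" where
  "pareto_optima C Z = {y \<in> Z. (Z - {y}) \<inter> (\<lambda>c. y + c) ` C = {}}"

end

theory Submission
  imports Defs
begin

text \<open>Every point of the convex hull of \<open>Y\<close> lies \<open>C\<close>-below some point of \<open>Y\<close>. For one
  antichain-convex summand \<open>S\<close> this holds because the set of points below \<open>S\<close> is convex: of two
  points of \<open>S\<close> dominating \<open>p\<^sub>1\<close> and \<open>p\<^sub>2\<close>, either one dominates the other and then dominates the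
  whole segment, or they are incomparable and their convex combination stays in \<open>S\<close>.
  Since convex hulls commute with Minkowski sums, the property passes to \<open>Y\<close>. A Pareto optimum
  of the hull is then dominated by a point of \<open>Y\<close>, which can only be itself; conversely, for
  pointed \<open>C\<close> a point of the hull strictly above an optimum of \<open>Y\<close> would be dominated by a point
  of \<open>Y\<close> strictly above that optimum.\<close>

definition cone_downset :: "'a::real_vector set \<Rightarrow> 'a set \<Rightarrow> 'a set" where
  "cone_downset C S = {p. \<exists>M\<in>S. M - p \<in> insert 0 C}"

lemma convex_cone_insert_0:
  assumes "is_cone C" and "convex C"
  shows "convex_cone (insert 0 C)"
  unfolding convex_cone_iff
proof (intro conjI ballI allI impI)
  fix a b assume ab: "a \<in> insert 0 C" "b \<in> insert 0 C"
  show "a + b \<in> insert 0 C"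
  proof (cases "a \<in> C \<and> b \<in> C")
    case True
    then have "(1/2::real) *\<^sub>R a + (1/2::real) *\<^sub>R b \<in> C"
      using \<open>convex C\<close> unfolding convex_def by auto
    then have "(2::real) *\<^sub>R ((1/2::real) *\<^sub>R a + (1/2::real) *\<^sub>R b) \<in> C"
      using \<open>is_cone C\<close> unfolding is_cone_def by (metis zero_less_numeral)
    then show ?thesis by (simp add: scaleR_add_right)
  next
    case False
    with ab show ?thesis by auto
  qed
next
  fix a and c :: real assume "a \<in> insert 0 C" "0 \<le> c"
  then show "c *\<^sub>R a \<in> insert 0 C"
    using \<open>is_cone C\<close> unfolding is_cone_def by (cases "c = 0") auto
qed simp

lemma subset_cone_downset: "S \<subseteq> cone_downset C S"
  unfolding cone_downset_def by force

lemma convex_cone_dominates_combination: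
  assumes K: "convex_cone K" and "M\<^sub>1 - p\<^sub>1 \<in> K" "M\<^sub>2 - p\<^sub>2 \<in> K" "M\<^sub>2 - M\<^sub>1 \<in> K"
    and uv: "0 \<le> u" "0 \<le> v" "u + v = 1"
  shows "M\<^sub>2 - (u *\<^sub>R p\<^sub>1 + v *\<^sub>R p\<^sub>2) \<in> K"
proof -
  have "M\<^sub>2 = u *\<^sub>R M\<^sub>2 + v *\<^sub>R M\<^sub>2"
    using uv(3) by (metis scaleR_add_left scaleR_one)
  then have "M\<^sub>2 - (u *\<^sub>R p\<^sub>1 + v *\<^sub>R p\<^sub>2)
      = u *\<^sub>R (M\<^sub>2 - M\<^sub>1) + (u *\<^sub>R (M\<^sub>1 - p\<^sub>1) + v *\<^sub>R (M\<^sub>2 - p\<^sub>2))"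
    by (simp add: algebra_simps)
  also have "\<dots> \<in> K"
    using assms by (intro convex_cone_add convex_cone_scaleR)
  finally show ?thesis .
qed

lemma convex_cone_downset:
  assumes "is_cone C" and "convex C" and ac: "antichain_convex C S"
  shows "convex (cone_downset C S)"
proof (rule convexI)
  let ?K = "insert 0 C"
  have K: "convex_cone ?K"
    using assms(1,2) by (rule convex_cone_insert_0)
  fix p\<^sub>1 p\<^sub>2 and u v :: real
  assume "p\<^sub>1 \<in> cone_downset C S" "p\<^sub>2 \<in> cone_downset C S" and uv: "0 \<le> u" "0 \<le> v" "u + v = 1"
  then obtain M\<^sub>1 M\<^sub>2 where M\<^sub>1: "M\<^sub>1 \<in> S" "M\<^sub>1 - p\<^sub>1 \<in> ?K" and M\<^sub>2: "M\<^sub>2 \<in> S" "M\<^sub>2 - p\<^sub>2 \<in> ?K"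
    unfolding cone_downset_def by blast
  let ?p = "u *\<^sub>R p\<^sub>1 + v *\<^sub>R p\<^sub>2"
  consider "M\<^sub>2 - M\<^sub>1 \<in> C" | "M\<^sub>1 - M\<^sub>2 \<in> C" | "M\<^sub>2 - M\<^sub>1 \<notin> C \<union> uminus ` C"
    by (auto simp: image_iff equation_minus_iff)
  then show "?p \<in> cone_downset C S"
  proof cases
    case 1
    then have "M\<^sub>2 - ?p \<in> ?K"
      using convex_cone_dominates_combination[OF K M\<^sub>1(2) M\<^sub>2(2) _ uv] by blast
    with M\<^sub>2(1) show ?thesis unfolding cone_downset_def by blast
  next
    case 2
    then have "M\<^sub>1 - (v *\<^sub>R p\<^sub>2 + u *\<^sub>R p\<^sub>1) \<in> ?K"
      using convex_cone_dominates_combination[OF K M\<^sub>2(2) M\<^sub>1(2) _ uv(2,1)] uv(3) by simp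
    with M\<^sub>1(1) show ?thesis unfolding cone_downset_def by (auto simp: add.commute)
  next
    case 3
    let ?M = "u *\<^sub>R M\<^sub>1 + v *\<^sub>R M\<^sub>2"
    have "?M - ?p = u *\<^sub>R (M\<^sub>1 - p\<^sub>1) + v *\<^sub>R (M\<^sub>2 - p\<^sub>2)"
      by (simp add: algebra_simps)
    also have "\<dots> \<in> ?K"
      using K M\<^sub>1(2) M\<^sub>2(2) uv by (intro convex_cone_add convex_cone_scaleR)
    finally have "?M - ?p \<in> ?K" .
    moreover have "v = 1 - u"
      using uv(3) by simp
    then have "?M \<in> S"
      using ac M\<^sub>1(1) M\<^sub>2(1) 3 uv(1,2) unfolding antichain_convex_def by simp
    ultimately show ?thesis unfolding cone_downset_def by blast
  qed
qed

lemma cone_downset_plus: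
  assumes "convex_cone (insert 0 C)"
  shows "cone_downset C A + cone_downset C B \<subseteq> cone_downset C (A + B)"
proof
  fix p assume "p \<in> cone_downset C A + cone_downset C B"
  then obtain a b M N where p: "p = a + b" and "M \<in> A" "N \<in> B"
    and "M - a \<in> insert 0 C" "N - b \<in> insert 0 C"
    unfolding cone_downset_def by (auto elim: set_plus_elim)
  have "(M + N) - p = (M - a) + (N - b)"
    unfolding p by simp
  also have "\<dots> \<in> insert 0 C"
    using assms \<open>M - a \<in> insert 0 C\<close> \<open>N - b \<in> insert 0 C\<close> by (rule convex_cone_add)
  finally show "p \<in> cone_downset C (A + B)"
    using \<open>M \<in> A\<close> \<open>N \<in> B\<close> unfolding cone_downset_def by blast
qed

lemma convex_hull_sum_subset_cone_downset:
  assumes "is_cone C" and "convex C" and "finite A" and "\<forall>i\<in>A. antichain_convex C (S i)"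
  shows "convex hull (\<Sum>i\<in>A. S i) \<subseteq> cone_downset C (\<Sum>i\<in>A. S i)"
  using assms(3,4)
proof (induction A rule: finite_induct)
  case empty
  then show ?case by (simp add: subset_cone_downset)
next
  case (insert j A)
  have "convex hull (\<Sum>i\<in>insert j A. S i) = convex hull (S j) + convex hull (\<Sum>i\<in>A. S i)"
    using insert.hyps by (simp add: convex_hull_set_plus)
  also have "\<dots> \<subseteq> cone_downset C (S j) + cone_downset C (\<Sum>i\<in>A. S i)"
  proof (rule set_plus_mono2)
    show "convex hull (S j) \<subseteq> cone_downset C (S j)"
      using insert.prems assms(1,2)
      by (intro hull_minimal subset_cone_downset convex_cone_downset) auto
  qed (use insert in auto)
  also have "\<dots> \<subseteq> cone_downset C (\<Sum>i\<in>insert j A. S i)"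
    using insert.hyps cone_downset_plus[OF convex_cone_insert_0[OF assms(1,2)]] by simp
  finally show ?case .
qed

lemma convex_hull_subset_cone_downset:
  assumes "is_cone C" and "convex C" and "decomp_antichain_convex C Y"
  shows "convex hull Y \<subseteq> cone_downset C Y"
proof -
  obtain n :: nat and S where "\<forall>i<n. antichain_convex C (S i)" and "Y = (\<Sum>i<n. S i)"
    using assms(3) unfolding decomp_antichain_convex_def by blast
  then show ?thesis
    using convex_hull_sum_subset_cone_downset[OF assms(1,2), of "{..<n}" S] by simp
qed

lemma image_add_memI:
  fixes M y :: "'a::ab_group_add"
  assumes "M - y \<in> insert 0 C" and "M \<noteq> y"
  shows "M \<in> (\<lambda>c. y + c) ` C"
proof (rule image_eqI)
  show "M = y + (M - y)" by simp
  show "M - y \<in> C" using assms by simp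
qed

lemma pareto_optima_of_dominating_subset:
  assumes "Y \<subseteq> Z" and "Z \<subseteq> cone_downset C Y"
  shows "pareto_optima C Z \<subseteq> pareto_optima C Y"
proof
  fix y assume "y \<in> pareto_optima C Z"
  then have "y \<in> Z" and opt: "(Z - {y}) \<inter> (\<lambda>c. y + c) ` C = {}"
    unfolding pareto_optima_def by auto
  then obtain M where M: "M \<in> Y" "M - y \<in> insert 0 C"
    using assms(2) unfolding cone_downset_def by blast
  have "M = y"
  proof (rule ccontr)
    assume "M \<noteq> y"
    with M(2) have "M \<in> (\<lambda>c. y + c) ` C"
      by (rule image_add_memI)
    with opt M(1) assms(1) \<open>M \<noteq> y\<close> show False by blast
  qed
  with M(1) opt assms(1) show "y \<in> pareto_optima C Y"
    unfolding pareto_optima_def by blast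
qed

lemma pareto_optima_eq_of_dominating_subset:
  assumes "Y \<subseteq> Z" and "Z \<subseteq> cone_downset C Y"
    and K: "convex_cone (insert 0 C)" and "pointed_cone C"
  shows "pareto_optima C Y = pareto_optima C Z"
proof
  show "pareto_optima C Y \<subseteq> pareto_optima C Z"
  proof
    fix y assume "y \<in> pareto_optima C Y"
    then have "y \<in> Y" and opt: "(Y - {y}) \<inter> (\<lambda>c. y + c) ` C = {}"
      unfolding pareto_optima_def by auto
    have "y + c \<notin> Z - {y}" if "c \<in> C" for c
    proof
      assume "y + c \<in> Z - {y}"
      then have "c \<noteq> 0" and "y + c \<in> Z"
        by auto
      then obtain M where M: "M \<in> Y" "M - (y + c) \<in> insert 0 C"
        using assms(2) unfolding cone_downset_def by blast
      have "M - y = (M - (y + c)) + c"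
        by simp
      also have "\<dots> \<in> insert 0 C"
        using K M(2) \<open>c \<in> C\<close> by (intro convex_cone_add) auto
      finally have "M - y \<in> insert 0 C" .
      show False
      proof (cases "M = y")
        case True
        then have "c \<in> C \<inter> uminus ` C"
          using M(2) \<open>c \<in> C\<close> \<open>c \<noteq> 0\<close> by (auto intro!: image_eqI[where x = "- c"])
        with \<open>pointed_cone C\<close> \<open>c \<noteq> 0\<close> show False
          unfolding pointed_cone_def by blast
      next
        case False
        with \<open>M - y \<in> insert 0 C\<close> have "M \<in> (\<lambda>c. y + c) ` C"
          by (rule image_add_memI)
        with opt M(1) False show False by blast
      qed
    qed
    then have "(Z - {y}) \<inter> (\<lambda>c. y + c) ` C = {}"
      by blast
    with \<open>y \<in> Y\<close> assms(1) show "y \<in> pareto_optima C Z"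
      unfolding pareto_optima_def by blast
  qed
qed (rule pareto_optima_of_dominating_subset[OF assms(1,2)])

theorem theorem5:
  fixes C Y :: "'a::real_vector set"
  assumes "is_cone C" and "convex C" and "decomp_antichain_convex C Y"
  shows "pareto_optima C (convex hull Y) \<subseteq> pareto_optima C Y \<and>
         (pointed_cone C \<longrightarrow> pareto_optima C Y = pareto_optima C (convex hull Y))"
proof -
  have dominating: "Y \<subseteq> convex hull Y" "convex hull Y \<subseteq> cone_downset C Y"
    by (rule hull_subset, rule convex_hull_subset_cone_downset[OF assms])
  show ?thesis
  proof (intro conjI impI)
    show "pareto_optima C (convex hull Y) \<subseteq> pareto_optima C Y"
      using dominating by (rule pareto_optima_of_dominating_subset)
    show "pareto_optima C Y = pareto_optima C (convex hull Y)" if "pointed_cone C"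
      using dominating convex_cone_insert_0[OF assms(1,2)] that
      by (rule pareto_optima_eq_of_dominating_subset)
  qed
qed

end
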